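(* Let $(\rho_n)_{n\ge1}$ with $\rho_n$ a probability measure on $\mathbb{Y}_n$. Then $(\rho_n)$ is LLN-appropriate if and only if there exist reals $(c_k)_{k\ge1}$ such that (1) for every cycle $\sigma\in S_\infty$ of length $k$, $\lim_n n^{|\sigma|/2}M_{\rho_n}(\sigma)=c_k$; and (2) for every $r\ge2$ and cycles $\sigma_1,\dots,\sigma_r\in S_\infty$ with pairwise disjoint supports, $\lim_n n^{(|\sigma_1|+\dots+|\sigma_r|)/2}\kappa_{\rho_n,r}(\sigma_1,\dots,\sigma_r)=0$.
   Context: $\mathbb{Y}_n$: partitions of $n$; $S_\infty=\bigcup_mS_m$; $|\sigma|$ is the minimal number of transpositions whose product is $\sigma$ (so a $k$-cycle has $|\sigma|=k-1$). $M_\rho(\sigma)=\sum_{\lambda\in\mathbb{Y}_n}\rho(\lambda)\chi_\lambda(\tau)/\dim\lambda$ if $\sigma$ is conjugate to some $\tau\in S_n$, else $0$ ($\chi_\lambda$ irreducible characters, $\dim\lambda=\chi_\lambda(e)$). Permutation-cumulant of permutations with disjoint supports: $\kappa_{\rho,r}(\sigma_1,\dots,\sigma_r)=\sum_{\pi}(-1)^{|\pi|-1}(|\pi|-1)!\prod_{B\in\pi}M_\rho(\prod_{j\in B}\sigma_j)$, over set partitions $\pi$ of $\{1,\dots,r\}$. Young generating function $A_\rho=\sum_{\vec i}M_\rho(\sigma_{\vec i})\prod_{k\ge1}n^{i_k(k-1)/2}x_k^{i_k}/i_k!$ over finitely supported $\vec i\in\mathbb{Z}_{\ge0}^{\mathbb{N}}$,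 $\sigma_{\vec i}$ any permutation with $i_k$ cycles of length $k$ for each $k\ge2$. $(\rho_n)$ is LLN-appropriate if for some reals $c_i$, $\lim_n\partial_i\ln A_{\rho_n}|_{\vec x=0}=c_i$ for all $i$ and all formal mixed derivatives of order $\ge2$ of $\ln A_{\rho_n}$ at $\vec x=0$ tend to $0$. *)

theory Defs
  imports Complex_Main "HOL-Combinatorics.Combinatorics" "HOL-Library.Disjoint_Sets"
begin

definition partitions :: "nat \<Rightarrow> nat list set" where
  "partitions n = {ls. sum_list ls = n \<and> (\<forall>x\<in>set ls. 0 < x) \<and> sorted_wrt (\<ge>) ls}"

definition supp :: "(nat \<Rightarrow> nat) \<Rightarrow> nat set" where
  "supp \<sigma> = {x. \<sigma> x \<noteq> x}"

definition finperm :: "(nat \<Rightarrow> nat) \<Rightarrow> bool" where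
  "finperm \<sigma> \<longleftrightarrow> bij \<sigma> \<and> finite (supp \<sigma>)"

definition cyc_len :: "(nat \<Rightarrow> nat) \<Rightarrow> nat \<Rightarrow> nat" where
  "cyc_len \<sigma> x = (LEAST k. 0 < k \<and> (\<sigma> ^^ k) x = x)"

definition ncyc :: "(nat \<Rightarrow> nat) \<Rightarrow> nat \<Rightarrow> nat" where
  "ncyc \<sigma> k = card {x \<in> supp \<sigma>. cyc_len \<sigma> x = k} div k"

text \<open>Cycle type (as a list of cycle lengths, including fixed points) of \<sigma> regarded
  as an element of S_n (valid when card (supp \<sigma>) \<le> n).\<close>
definition ctype :: "nat \<Rightarrow> (nat \<Rightarrow> nat) \<Rightarrow> nat list" where
  "ctype n \<sigma> = replicate (n - card (supp \<sigma>)) 1 @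
     concat (map (\<lambda>k. replicate (ncyc \<sigma> k) k) [2..<card (supp \<sigma>) + 1])"

definition is_cycle :: "nat \<Rightarrow> (nat \<Rightarrow> nat) \<Rightarrow> bool" where
  "is_cycle k \<sigma> \<longleftrightarrow> (\<exists>cs. distinct cs \<and> length cs = k \<and> \<sigma> = cycle_of_list cs)"

text \<open>Coefficient of x^\<alpha> in p_{\<mu>_1} \<cdots> p_{\<mu>_m}(x_0,\<dots>,x_{l-1}) equals the number of
  maps f of the parts to the variables with \<Sum>_{f j = i} \<mu>_j = \<alpha>_i. The Frobenius formula
  \<chi>_\<lambda>(\<mu>) = [x^{\<lambda>+\<delta>}] a_\<delta> p_\<mu> with l = length p variables, \<delta>_i = l-1-i.\<close>
definition frob_char :: "nat list \<Rightarrow> nat list \<Rightarrow> int" where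
  "frob_char p \<mu> = (let l = length p in
     \<Sum>w | w permutes {..<l}. sign w *
       int (card {f \<in> {..<length \<mu>} \<rightarrow>\<^sub>E {..<l}.
              \<forall>i<l. (\<Sum>j | j < length \<mu> \<and> f j = i. \<mu> ! j) + (l - 1 - w i)
                     = p ! i + (l - 1 - i)}))"

definition dimY :: "nat list \<Rightarrow> int" where
  "dimY p = frob_char p (replicate (sum_list p) 1)"

definition Mrho :: "(nat \<Rightarrow> nat list \<Rightarrow> real) \<Rightarrow> nat \<Rightarrow> (nat \<Rightarrow> nat) \<Rightarrow> real" where
  "Mrho \<rho> n \<sigma> =
    (if \<exists>\<tau> g. \<tau> permutes {..<n} \<and> finperm g \<and> \<sigma> = g \<circ> \<tau> \<circ> inv g
     then (\<Sum>p\<in>partitions n. \<rho> n p * of_int (frob_char p (ctype n \<sigma>)) / of_int (dimY p))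
     else 0)"

definition perm_prod :: "(nat \<Rightarrow> (nat \<Rightarrow> nat)) \<Rightarrow> nat set \<Rightarrow> (nat \<Rightarrow> nat)" where
  "perm_prod \<sigma>s B = foldr (\<circ>) (map \<sigma>s (sorted_list_of_set B)) id"

definition kappa :: "(nat \<Rightarrow> nat list \<Rightarrow> real) \<Rightarrow> nat \<Rightarrow> nat \<Rightarrow> (nat \<Rightarrow> (nat \<Rightarrow> nat)) \<Rightarrow> real" where
  "kappa \<rho> n r \<sigma>s = (\<Sum>P | partition_on {..<r} P.
      (-1) ^ (card P - 1) * fact (card P - 1) * (\<Prod>B\<in>P. Mrho \<rho> n (perm_prod \<sigma>s B)))"

text \<open>Multi-indices \<^term>\<open>i :: nat \<Rightarrow> nat\<close> for the variables x_1, x_2, ...: finitely supported, i 0 = 0.\<close>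
definition mindex :: "(nat \<Rightarrow> nat) \<Rightarrow> bool" where
  "mindex i \<longleftrightarrow> i 0 = 0 \<and> finite {k. i k \<noteq> 0}"

definition mfact :: "(nat \<Rightarrow> nat) \<Rightarrow> real" where
  "mfact i = (\<Prod>k | i k \<noteq> 0. fact (i k))"

definition morder :: "(nat \<Rightarrow> nat) \<Rightarrow> nat" where
  "morder i = (\<Sum>k | i k \<noteq> 0. i k)"

definition unit_index :: "nat \<Rightarrow> (nat \<Rightarrow> nat)" where
  "unit_index k = (\<lambda>j. if j = k then 1 else 0)"

text \<open>Derivative \<partial>^i A_\<rho> at 0 = i! [x^i] A = M_\<rho>(\<sigma>_i) \<Prod>_k n^{i_k(k-1)/2}.\<close>
definition Aderiv :: "(nat \<Rightarrow> nat list \<Rightarrow> real) \<Rightarrow> nat \<Rightarrow> (nat \<Rightarrow> nat) \<Rightarrow> real" where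
  "Aderiv \<rho> n i = Mrho \<rho> n (SOME \<sigma>. finperm \<sigma> \<and> (\<forall>k\<ge>2. ncyc \<sigma> k = i k))
      * (\<Prod>k | i k \<noteq> 0. real n powr (real (i k) * (real k - 1) / 2))"

text \<open>Coefficient [x^i] of ln A = ln(1 + B), B = A - 1, via \<Sum>_{m\<ge>1} (-1)^{m-1} B^m / m.\<close>
definition lnA_coeff :: "(nat \<Rightarrow> nat list \<Rightarrow> real) \<Rightarrow> nat \<Rightarrow> (nat \<Rightarrow> nat) \<Rightarrow> real" where
  "lnA_coeff \<rho> n i = (\<Sum>m\<in>{1..morder i}. (-1) ^ (m - 1) / real m *
      (\<Sum>js \<in> {js \<in> {..<m} \<rightarrow>\<^sub>E {j. j \<le> i}.
             (\<forall>t<m. js t \<noteq> (\<lambda>_. 0)) \<and> (\<forall>k. (\<Sum>t<m. js t k) = i k)}.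
         \<Prod>t<m. Aderiv \<rho> n (js t) / mfact (js t)))"

definition lnA_deriv :: "(nat \<Rightarrow> nat list \<Rightarrow> real) \<Rightarrow> nat \<Rightarrow> (nat \<Rightarrow> nat) \<Rightarrow> real" where
  "lnA_deriv \<rho> n i = mfact i * lnA_coeff \<rho> n i"

definition LLN_appropriate :: "(nat \<Rightarrow> nat list \<Rightarrow> real) \<Rightarrow> bool" where
  "LLN_appropriate \<rho> \<longleftrightarrow> (\<exists>c :: nat \<Rightarrow> real.
     (\<forall>k\<ge>1. (\<lambda>n. lnA_deriv \<rho> n (unit_index k)) \<longlonglongrightarrow> c k) \<and>
     (\<forall>i. mindex i \<and> 2 \<le> morder i \<longrightarrow> (\<lambda>n. lnA_deriv \<rho> n i) \<longlonglongrightarrow> 0))"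

end

theory Submission
  imports Defs
begin

text \<open>For every \<rho> and every n \<ge> 1 the coefficients of ln A appearing in the definition of
  LLN-appropriateness are exactly the normalised permutation cumulants, so the two conditions
  of the theorem restate that definition.

  Let \<sigma>s 0, ..., \<sigma>s (r - 1) be disjoint cycles and i the multi-index of their lengths.
  Since Mrho is a class function, the derivative of A for the lengths in a block B is
  n powr (\<Sum>j\<in>B. (len j - 1) / 2) times Mrho of the product of the cycles in B. In
  ln A = \<Sum>m (-1)^(m-1) (A - 1)^m / m, the x^i coefficient of (A - 1)^m is a sum over ordered
  compositions of i into m nonzero parts; multiplied by i! it becomes a sum over surjections
  {..<r} \<rightarrow> {..<m}, because i! / \<Prod>t (js t)! surjections have fibres of types js. Every set
  partition of {..<r} into m blocks is the fibre partition of exactly m! surjections, which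
  turns the weight (-1)^(m-1) / m into the cumulant weight (-1)^(m-1) (m-1)!. Finally every
  multi-index of order r is the length type of some family of r disjoint cycles.\<close>

section \<open>Cycle structure of finitely supported permutations\<close>

lemma finperm_iff_permutation: "finperm \<sigma> \<longleftrightarrow> permutation \<sigma>"
  by (simp add: finperm_def permutation supp_def)

lemma finite_supp: "permutation p \<Longrightarrow> finite (supp p)"
  by (simp add: permutation supp_def)

lemma cyc_len_eq_least_power: "cyc_len \<sigma> x = least_power \<sigma> x"
  unfolding cyc_len_def least_power_def by (simp add: conj_commute)

lemma card_set_support: "permutation p \<Longrightarrow> card (set (support p a)) = least_power p a"
  using distinct_card[OF cycle_of_permutation] by simp

lemma self_in_set_support: "permutation p \<Longrightarrow> a \<in> set (support p a)"
  using least_power_of_permutation(2)[of p a] by force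

lemma set_support_eq_if_mem:
  assumes "permutation p" "b \<in> set (support p a)"
  shows "set (support p b) = set (support p a)"
proof -
  have "set (support p b) \<inter> set (support p a) \<noteq> {}"
    using self_in_set_support[OF assms(1), of b] assms(2) by blast
  then show ?thesis using disjoint_support[OF assms(1)] unfolding disjoint_def by blast
qed

lemma least_power_eq_if_mem_support:
  assumes "permutation p" "b \<in> set (support p a)"
  shows "least_power p b = least_power p a"
  using card_set_support[OF assms(1)] set_support_eq_if_mem[OF assms] by metis

lemma set_support_subset_supp:
  assumes "permutation p" "p a \<noteq> a"
  shows "set (support p a) \<subseteq> supp p"
  using support_coverture[OF assms(1)] assms(2) unfolding supp_def by blast

text \<open>The points of supp p lying on cycles of length k split into orbits of size k,
  so their number is divisible by k and the integer division in ncyc is exact.\<close>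

lemma card_cyc_len_eq:
  assumes p: "permutation p"
  shows "card {x \<in> supp p. cyc_len p x = k} = k * ncyc p k"
proof -
  let ?C = "{x \<in> supp p. cyc_len p x = k}"
  let ?O = "(\<lambda>a. set (support p a)) ` ?C"
  have union: "\<Union>?O = ?C"
  proof
    show "\<Union>?O \<subseteq> ?C"
    proof
      fix b assume "b \<in> \<Union>?O"
      then obtain a where a: "a \<in> ?C" "b \<in> set (support p a)" by auto
      then have "b \<in> supp p" using set_support_subset_supp[OF p, of a] by (auto simp: supp_def)
      moreover have "cyc_len p b = k"
        using least_power_eq_if_mem_support[OF p a(2)] a(1) by (simp add: cyc_len_eq_least_power)
      ultimately show "b \<in> ?C" by simp
    qed
    show "?C \<subseteq> \<Union>?O" using self_in_set_support[OF p] by blast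
  qed
  have "pairwise disjnt ?O"
    using disjoint_support[OF p] unfolding disjoint_def pairwise_def disjnt_def by blast
  then have "card (\<Union>?O) = sum card ?O"
    by (rule card_Union_disjoint) auto
  then have "card ?C = sum card ?O"
    by (simp only: union)
  also have "\<dots> = k * card ?O"
  proof -
    have "card X = k" if "X \<in> ?O" for X
      using that card_set_support[OF p] by (auto simp: cyc_len_eq_least_power)
    then show ?thesis by simp
  qed
  finally have "card ?C = k * card ?O" .
  then show ?thesis
    by (cases "k = 0") (simp_all add: ncyc_def)
qed

lemma card_supp_eq_sum_ncyc:
  assumes p: "permutation p" and M: "card (supp p) \<le> M"
  shows "card (supp p) = (\<Sum>k\<in>{2..M}. k * ncyc p k)"
proof -
  have "2 \<le> cyc_len p x \<and> cyc_len p x \<le> M" if "x \<in> supp p" for x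
  proof -
    have "card (set (support p x)) \<le> card (supp p)"
      using set_support_subset_supp[OF p, of x] that finite_supp[OF p] by (simp add: card_mono supp_def)
    then show ?thesis
      using least_power_gt_one[OF p, of x] card_set_support[OF p, of x] that M
      by (simp add: supp_def cyc_len_eq_least_power)
  qed
  then have "supp p = (\<Union>k\<in>{2..M}. {x \<in> supp p. cyc_len p x = k})"
    by auto
  also have "card \<dots> = (\<Sum>k\<in>{2..M}. card {x \<in> supp p. cyc_len p x = k})"
    by (rule card_UN_disjoint) (use finite_supp[OF p] in auto)
  finally show ?thesis using card_cyc_len_eq[OF p] by simp
qed

lemma card_supp_eq_if_ncyc_eq:
  assumes "permutation p" "permutation q" "\<forall>k\<ge>2. ncyc p k = ncyc q k"
  shows "card (supp p) = card (supp q)"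
proof -
  let ?M = "max (card (supp p)) (card (supp q))"
  have "card (supp p) = (\<Sum>k\<in>{2..?M}. k * ncyc p k)"
    by (rule card_supp_eq_sum_ncyc[OF assms(1)]) simp
  also have "\<dots> = (\<Sum>k\<in>{2..?M}. k * ncyc q k)"
    using assms(3) by (intro sum.cong) auto
  also have "\<dots> = card (supp q)"
    by (rule card_supp_eq_sum_ncyc[OF assms(2), symmetric]) simp
  finally show ?thesis .
qed

lemma supp_conjugate:
  assumes "bij g"
  shows "supp (g \<circ> \<tau> \<circ> inv g) = g ` supp \<tau>"
proof -
  have "x \<in> supp (g \<circ> \<tau> \<circ> inv g) \<longleftrightarrow> inv g x \<in> supp \<tau>" for x
    using assms by (auto simp: supp_def bij_inv_eq_iff bij_is_surj surj_f_inv_f)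
  moreover have "x = g (inv g x)" for x
    using assms by (simp add: bij_is_surj surj_f_inv_f)
  ultimately show ?thesis
    using assms by (auto simp: bij_is_inj)
qed

text \<open>The witness swaps the points of S outside {..<n} with points of {..<n} not in S.\<close>

lemma ex_finperm_involution_into_lessThan:
  assumes fin: "finite S" and card: "card S \<le> n"
  shows "\<exists>g. finperm g \<and> g \<circ> g = id \<and> g ` S \<subseteq> {..<n}"
proof -
  define A where "A = S - {..<n}"
  define B where "B = {..<n} - S"
  have "card S = card (S \<inter> {..<n}) + card A"
    using card_Int_Diff[OF fin, of "{..<n}"] by (simp add: A_def)
  moreover have "n = card (S \<inter> {..<n}) + card B"
    using card_Int_Diff[of "{..<n}" S] by (simp add: B_def Int_commute)
  ultimately have "card A \<le> card B" using card by linarith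
  then obtain h where h: "h ` A \<subseteq> B" "inj_on h A"
    using card_le_inj[of A B] fin by (auto simp: A_def B_def)
  define g where "g x = (if x \<in> A then h x else if x \<in> h ` A then inv_into A h x else x)" for x
  have AB: "A \<inter> B = {}" "A \<inter> h ` A = {}" using h by (auto simp: A_def B_def)
  have gg: "g (g x) = x" for x
  proof (cases "x \<in> A")
    case True
    then show ?thesis using h AB by (auto simp: g_def)
  next
    case False
    then show ?thesis using h by (auto simp: g_def inv_into_into f_inv_into_f)
  qed
  then have g_inv: "g \<circ> g = id" by auto
  have "supp g \<subseteq> A \<union> h ` A" by (auto simp: supp_def g_def)
  then have "finperm g"
    using o_bij[OF g_inv g_inv] fin by (auto simp: finperm_def A_def intro: finite_subset)
  moreover have "g x < n" if "x \<in> S" for x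
  proof (cases "x \<in> A")
    case True
    then show ?thesis using h by (auto simp: g_def B_def)
  next
    case False
    moreover have "x \<notin> h ` A" using h that by (auto simp: B_def)
    ultimately show ?thesis using that by (simp add: g_def A_def)
  qed
  ultimately show ?thesis using g_inv by (intro exI[of _ g]) auto
qed

lemma conjugate_into_lessThan_iff:
  assumes "finperm \<sigma>"
  shows "(\<exists>\<tau> g. \<tau> permutes {..<n} \<and> finperm g \<and> \<sigma> = g \<circ> \<tau> \<circ> inv g) \<longleftrightarrow> card (supp \<sigma>) \<le> n"
proof
  assume "\<exists>\<tau> g. \<tau> permutes {..<n} \<and> finperm g \<and> \<sigma> = g \<circ> \<tau> \<circ> inv g"
  then obtain \<tau> g where \<tau>: "\<tau> permutes {..<n}" and g: "bij g" and \<sigma>: "\<sigma> = g \<circ> \<tau> \<circ> inv g"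
    by (auto simp: finperm_def)
  have "supp \<tau> \<subseteq> {..<n}"
    using \<tau> by (auto simp: supp_def permutes_def)
  then have "supp \<sigma> \<subseteq> g ` {..<n}"
    unfolding \<sigma> supp_conjugate[OF g] by (rule image_mono)
  then have "card (supp \<sigma>) \<le> card (g ` {..<n})"
    by (rule card_mono[rotated]) simp
  also have "\<dots> \<le> n"
    using card_image_le[of "{..<n}" g] by simp
  finally show "card (supp \<sigma>) \<le> n" .
next
  assume "card (supp \<sigma>) \<le> n"
  then obtain g where g: "finperm g" "g \<circ> g = id" "g ` supp \<sigma> \<subseteq> {..<n}"
    using ex_finperm_involution_into_lessThan assms by (metis finperm_def)
  have gg: "g (g x) = x" for x
    using g(2) by (metis comp_apply id_apply)
  have inv_g: "inv g = g" using inv_unique_comp[OF g(2) g(2)] .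
  define \<tau> where "\<tau> = g \<circ> \<sigma> \<circ> g"
  have "bij g" "bij \<sigma>" using g(1) assms by (auto simp: finperm_def)
  then have "bij \<tau>" by (simp add: \<tau>_def bij_comp)
  moreover have "supp \<tau> \<subseteq> {..<n}"
    using supp_conjugate[OF \<open>bij g\<close>, of \<sigma>] g(3) by (simp add: \<tau>_def inv_g)
  then have "\<tau> x = x" if "x \<notin> {..<n}" for x
    using that by (auto simp: supp_def)
  ultimately have "\<tau> permutes {..<n}"
    unfolding permutes_def by (simp add: bij_iff)
  moreover have "\<sigma> = g \<circ> \<tau> \<circ> inv g"
    by (simp add: \<tau>_def inv_g fun_eq_iff gg)
  ultimately show "\<exists>\<tau> g. \<tau> permutes {..<n} \<and> finperm g \<and> \<sigma> = g \<circ> \<tau> \<circ> inv g"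
    using g(1) by blast
qed

lemma Mrho_cong_ncyc:
  assumes p: "finperm p" and q: "finperm q" and ncyc: "\<forall>k\<ge>2. ncyc p k = ncyc q k"
  shows "Mrho \<rho> n p = Mrho \<rho> n q"
proof -
  have card: "card (supp p) = card (supp q)"
    using card_supp_eq_if_ncyc_eq p q ncyc unfolding finperm_iff_permutation by blast
  have cycles: "map (\<lambda>k. replicate (ncyc p k) k) [2..<card (supp q) + 1] =
      map (\<lambda>k. replicate (ncyc q k) k) [2..<card (supp q) + 1]"
    by (rule map_cong) (auto simp: ncyc)
  have "ctype n p = ctype n q"
    unfolding ctype_def card cycles ..
  then show ?thesis
    unfolding Mrho_def conjugate_into_lessThan_iff[OF p] conjugate_into_lessThan_iff[OF q] card
    by simp
qed

section \<open>Cycles and products of disjoint cycles\<close>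

lemma funpow_cycle_of_list_nth:
  assumes "distinct cs" "i < length cs"
  shows "(cycle_of_list cs ^^ t) (cs ! i) = cs ! ((t + i) mod length cs)"
proof -
  have "(cycle_of_list cs ^^ t) (cs ! i) = map (cycle_of_list cs ^^ t) cs ! i"
    using assms(2) by simp
  also have "\<dots> = rotate t cs ! i"
    by (simp only: cyclic_rotation[OF assms(1)])
  also have "\<dots> = cs ! ((t + i) mod length cs)"
    using assms(2) by (rule nth_rotate)
  finally show ?thesis .
qed

lemma add_mod_neq_self:
  fixes d k i :: nat
  assumes "0 < d" "d < k" "i < k"
  shows "(d + i) mod k \<noteq> i"
proof (cases "d + i < k")
  case False
  then have "(d + i) mod k = d + i - k"
    using assms by (simp add: le_mod_geq)
  then show ?thesis using False assms by linarith
qed (use assms in simp)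

lemma permutation_if_is_cycle: "is_cycle k \<sigma> \<Longrightarrow> permutation \<sigma>"
  unfolding is_cycle_def using permutation_of_cycle by blast

lemma cyc_len_if_is_cycle:
  assumes c: "is_cycle k \<sigma>" and x: "x \<in> supp \<sigma>"
  shows "cyc_len \<sigma> x = k"
proof -
  obtain cs where cs: "distinct cs" "length cs = k" "\<sigma> = cycle_of_list cs"
    using c unfolding is_cycle_def by blast
  have p: "permutation \<sigma>" using permutation_if_is_cycle[OF c] .
  have "x \<in> set cs" using id_outside_supp[of x cs] x cs(3) by (auto simp: supp_def)
  then obtain i where i: "i < k" "x = cs ! i" using cs(2) by (auto simp: in_set_conv_nth)
  have pow: "(\<sigma> ^^ t) x = x \<longleftrightarrow> (t + i) mod k = i" for t
    using funpow_cycle_of_list_nth[OF cs(1), of i t] nth_eq_iff_index_eq[OF cs(1), of "(t + i) mod k" i] i cs(2,3)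
    by simp
  have "least_power \<sigma> x dvd k" using pow least_power_dvd[OF p] i(1) by simp
  then have "least_power \<sigma> x \<le> k" using i(1) by (simp add: dvd_imp_le)
  moreover have "(least_power \<sigma> x + i) mod k = i"
    using pow[of "least_power \<sigma> x"] least_power_of_permutation(1)[OF p, of x] by blast
  ultimately have "least_power \<sigma> x = k"
    using least_power_of_permutation(2)[OF p, of x] i(1) add_mod_neq_self[of "least_power \<sigma> x" k i]
    by (metis le_neq_implies_less)
  then show ?thesis by (simp add: cyc_len_eq_least_power)
qed

lemma card_supp_if_is_cycle:
  assumes c: "is_cycle k \<sigma>"
  shows "card (supp \<sigma>) = (if 2 \<le> k then k else 0)"
proof -
  obtain cs where cs: "distinct cs" "length cs = k" "\<sigma> = cycle_of_list cs"
    using c unfolding is_cycle_def by blast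
  have supp_sub: "supp \<sigma> \<subseteq> set cs" using id_outside_supp[of _ cs] cs(3) by (auto simp: supp_def)
  show ?thesis
  proof (cases "2 \<le> k")
    case True
    have "\<sigma> x \<noteq> x" if "x \<in> set cs" for x
    proof -
      obtain i where i: "i < k" "x = cs ! i" using \<open>x \<in> set cs\<close> cs(2) by (auto simp: in_set_conv_nth)
      have "(1 + i) mod k \<noteq> i" using True i(1) add_mod_neq_self[of 1 k i] by simp
      then show ?thesis
        using funpow_cycle_of_list_nth[OF cs(1), of i 1] i cs(2,3)
          nth_eq_iff_index_eq[OF cs(1), of "(1 + i) mod k" i] by simp
    qed
    then have "supp \<sigma> = set cs" using supp_sub by (auto simp: supp_def)
    then show ?thesis using True cs by (simp add: distinct_card)
  next
    case False
    then have "length cs \<le> 1" using cs(2) by simp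
    then have "cs = [] \<or> (\<exists>a. cs = [a])" by (cases cs) auto
    then have "supp \<sigma> = {}" using cs(3) by (auto simp: supp_def)
    then show ?thesis using False by simp
  qed
qed

lemma permutation_apply_mem_supp:
  assumes "permutation \<sigma>" "x \<in> supp \<sigma>"
  shows "\<sigma> x \<in> supp \<sigma>"
proof -
  have "inj \<sigma>" using assms(1) by (simp add: permutation bij_is_inj)
  then show ?thesis using assms(2) by (auto simp: supp_def dest: injD)
qed

lemma permutation_foldr_comp:
  "\<forall>j\<in>set L. permutation (\<sigma>s j) \<Longrightarrow> permutation (foldr (\<circ>) (map \<sigma>s L) id)"
  by (induction L) (simp_all add: permutation_id permutation_compose)

lemma foldr_comp_apply_outside:
  "\<forall>j\<in>set L. x \<notin> supp (\<sigma>s j) \<Longrightarrow> foldr (\<circ>) (map \<sigma>s L) id x = x"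
  by (induction L) (simp_all add: supp_def)

lemma foldr_comp_apply_supp:
  assumes "distinct L" "\<forall>j\<in>set L. permutation (\<sigma>s j)"
    "disjoint_family_on (\<lambda>j. supp (\<sigma>s j)) (set L)" "j \<in> set L" "x \<in> supp (\<sigma>s j)"
  shows "foldr (\<circ>) (map \<sigma>s L) id x = \<sigma>s j x"
  using assms
proof (induction L)
  case (Cons l L)
  have disj: "supp (\<sigma>s j') \<inter> supp (\<sigma>s l) = {}" if "j' \<in> set L" for j'
    using Cons.prems(1,3) that by (auto simp: disjoint_family_on_def)
  have "foldr (\<circ>) (map \<sigma>s (l # L)) id x = \<sigma>s l (foldr (\<circ>) (map \<sigma>s L) id x)"
    by simp
  also have "\<dots> = \<sigma>s j x"
  proof (cases "j = l")
    case True
    then have "\<forall>j'\<in>set L. x \<notin> supp (\<sigma>s j')" using disj Cons.prems(5) by blast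
    then have "foldr (\<circ>) (map \<sigma>s L) id x = x" by (rule foldr_comp_apply_outside)
    then show ?thesis using True by (simp only:)
  next
    case False
    then have j: "j \<in> set L" using Cons.prems(4) by simp
    have "distinct L" "\<forall>j\<in>set L. permutation (\<sigma>s j)" "disjoint_family_on (\<lambda>j. supp (\<sigma>s j)) (set L)"
      using Cons.prems(1-3) by (auto simp: disjoint_family_on_def)
    then have "foldr (\<circ>) (map \<sigma>s L) id x = \<sigma>s j x"
      using Cons.IH j Cons.prems(5) by blast
    moreover have "\<sigma>s j x \<notin> supp (\<sigma>s l)"
      using permutation_apply_mem_supp Cons.prems(2,5) disj[OF j] j by auto
    ultimately show ?thesis by (simp add: supp_def)
  qed
  finally show ?case .
qed simp

lemma perm_prod_disjoint_supp:
  assumes "finite B" "\<forall>j\<in>B. permutation (\<sigma>s j)" "disjoint_family_on (\<lambda>j. supp (\<sigma>s j)) B"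
  shows "permutation (perm_prod \<sigma>s B)"
    and "j \<in> B \<Longrightarrow> x \<in> supp (\<sigma>s j) \<Longrightarrow> perm_prod \<sigma>s B x = \<sigma>s j x"
    and "(\<forall>j\<in>B. x \<notin> supp (\<sigma>s j)) \<Longrightarrow> perm_prod \<sigma>s B x = x"
  using permutation_foldr_comp[of "sorted_list_of_set B" \<sigma>s]
    foldr_comp_apply_supp[of "sorted_list_of_set B" \<sigma>s j x]
    foldr_comp_apply_outside[of "sorted_list_of_set B" x \<sigma>s] assms
  by (simp_all add: perm_prod_def)

lemma funpow_perm_prod:
  assumes "finite B" "\<forall>j\<in>B. permutation (\<sigma>s j)" "disjoint_family_on (\<lambda>j. supp (\<sigma>s j)) B"
    and j: "j \<in> B" and x: "x \<in> supp (\<sigma>s j)"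
  shows "(perm_prod \<sigma>s B ^^ t) x = (\<sigma>s j ^^ t) x"
proof -
  have "(perm_prod \<sigma>s B ^^ t) x = (\<sigma>s j ^^ t) x \<and> (\<sigma>s j ^^ t) x \<in> supp (\<sigma>s j)"
    by (induction t)
      (use x perm_prod_disjoint_supp(2)[OF assms(1-3) j] permutation_apply_mem_supp assms(2) j in auto)
  then show ?thesis ..
qed

lemma supp_perm_prod:
  assumes "finite B" "\<forall>j\<in>B. permutation (\<sigma>s j)" "disjoint_family_on (\<lambda>j. supp (\<sigma>s j)) B"
  shows "supp (perm_prod \<sigma>s B) = (\<Union>j\<in>B. supp (\<sigma>s j))"
proof
  show "supp (perm_prod \<sigma>s B) \<subseteq> (\<Union>j\<in>B. supp (\<sigma>s j))"
    using perm_prod_disjoint_supp(3)[OF assms] unfolding supp_def by blast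
  show "(\<Union>j\<in>B. supp (\<sigma>s j)) \<subseteq> supp (perm_prod \<sigma>s B)"
    using perm_prod_disjoint_supp(2)[OF assms] unfolding supp_def by force
qed

definition disjoint_cycles :: "nat \<Rightarrow> (nat \<Rightarrow> nat) \<Rightarrow> (nat \<Rightarrow> nat \<Rightarrow> nat) \<Rightarrow> bool" where
  "disjoint_cycles r len \<sigma>s \<longleftrightarrow> (\<forall>j<r. 1 \<le> len j \<and> is_cycle (len j) (\<sigma>s j)) \<and>
     (\<forall>j<r. \<forall>j'<r. j \<noteq> j' \<longrightarrow> supp (\<sigma>s j) \<inter> supp (\<sigma>s j') = {})"

text \<open>For S = {..<r} this is the multi-index i of the derivative of A that corresponds to
  the cycles \<sigma>s 0, ..., \<sigma>s (r - 1) of lengths len 0, ..., len (r - 1).\<close>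

definition length_type :: "(nat \<Rightarrow> nat) \<Rightarrow> nat set \<Rightarrow> nat \<Rightarrow> nat" where
  "length_type len S = (\<lambda>k. card {j \<in> S. len j = k})"

lemma length_type_empty [simp]: "length_type len {} = (\<lambda>k. 0)"
  by (simp add: length_type_def)

lemma length_type_insert:
  assumes "finite S" "x \<notin> S"
  shows "length_type len (insert x S) k = length_type len S k + (if len x = k then 1 else 0)"
proof -
  have "{j \<in> insert x S. len j = k} =
      (if len x = k then insert x {j \<in> S. len j = k} else {j \<in> S. len j = k})"
    by auto
  then show ?thesis using assms by (simp add: length_type_def)
qed

lemma length_type_mono: "A \<subseteq> B \<Longrightarrow> finite B \<Longrightarrow> length_type len A \<le> length_type len B"
  unfolding length_type_def le_fun_def by (auto intro: card_mono)

lemma length_type_nonzero_eq_image: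
  assumes "finite S"
  shows "{k. length_type len S k \<noteq> 0} = len ` S"
  using assms by (auto simp: length_type_def)

lemma sum_length_type:
  fixes f :: "nat \<Rightarrow> 'a :: semiring_1"
  assumes "finite S"
  shows "(\<Sum>j\<in>S. f (len j)) = (\<Sum>k | length_type len S k \<noteq> 0. of_nat (length_type len S k) * f k)"
proof -
  have "(\<Sum>j\<in>S. f (len j)) = (\<Sum>k\<in>len ` S. \<Sum>j\<in>{j \<in> S. len j = k}. f (len j))"
    by (rule sum.group[symmetric]) (use assms in auto)
  also have "\<dots> = (\<Sum>k\<in>len ` S. of_nat (length_type len S k) * f k)"
    by (intro sum.cong refl) (simp add: length_type_def)
  finally show ?thesis unfolding length_type_nonzero_eq_image[OF assms] .
qed

lemma morder_length_type: "morder (length_type len {..<r}) = r"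
  using sum_length_type[of "{..<r}" "\<lambda>_. 1 :: nat" len] by (simp add: morder_def)

lemma mindex_length_type:
  assumes "\<forall>j<r. 1 \<le> len j"
  shows "mindex (length_type len {..<r})"
  using assms length_type_nonzero_eq_image[of "{..<r}" len]
  by (auto simp: mindex_def length_type_def)

lemma disjoint_cycles_disjoint_family_on:
  assumes "disjoint_cycles r len \<sigma>s" "B \<subseteq> {..<r}"
  shows "disjoint_family_on (\<lambda>j. supp (\<sigma>s j)) B"
  using assms unfolding disjoint_cycles_def disjoint_family_on_def by blast

lemma disjoint_cycles_permutation:
  assumes "disjoint_cycles r len \<sigma>s" "j < r"
  shows "permutation (\<sigma>s j)"
  using assms permutation_if_is_cycle unfolding disjoint_cycles_def by blast

lemma ncyc_perm_prod:
  assumes cs: "disjoint_cycles r len \<sigma>s" and B: "B \<subseteq> {..<r}" and k: "2 \<le> k"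
  shows "ncyc (perm_prod \<sigma>s B) k = length_type len B k"
proof -
  let ?P = "perm_prod \<sigma>s B"
  let ?J = "{j \<in> B. len j = k}"
  have fin: "finite B" using B finite_subset by blast
  have perms: "\<forall>j\<in>B. permutation (\<sigma>s j)"
    using disjoint_cycles_permutation[OF cs] B by blast
  note disj = disjoint_cycles_disjoint_family_on[OF cs B]
  have cyc: "is_cycle (len j) (\<sigma>s j)" if "j \<in> B" for j
    using cs B that unfolding disjoint_cycles_def by auto
  have "cyc_len ?P x = len j" if "j \<in> B" "x \<in> supp (\<sigma>s j)" for j x
    using funpow_perm_prod[OF fin perms disj that] cyc_len_if_is_cycle[OF cyc that(2)] that(1)
    unfolding cyc_len_def by simp
  then have "{x \<in> supp ?P. cyc_len ?P x = k} = (\<Union>j\<in>?J. supp (\<sigma>s j))"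
    unfolding supp_perm_prod[OF fin perms disj] using disj
    by (auto simp: disjoint_family_on_def)
  moreover have card_supp: "card (supp (\<sigma>s j)) = k" if "j \<in> ?J" for j
    using card_supp_if_is_cycle[OF cyc, of j] that k by auto
  moreover have "finite (supp (\<sigma>s j))" if "j \<in> ?J" for j
    using card_supp[OF that] k card.infinite by fastforce
  ultimately have "card {x \<in> supp ?P. cyc_len ?P x = k} = (\<Sum>j\<in>?J. card (supp (\<sigma>s j)))"
    using card_UN_disjoint[of ?J "\<lambda>j. supp (\<sigma>s j)"] fin disj
    by (auto simp: disjoint_family_on_def)
  also have "\<dots> = k * card ?J" using card_supp by simp
  finally show ?thesis using k by (simp add: ncyc_def length_type_def)
qed

text \<open>Aderiv picks an arbitrary permutation of the required cycle type; since Mrho is a class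
  function, the product of the cycles in a block serves as well.\<close>

lemma Aderiv_length_type:
  assumes cs: "disjoint_cycles r len \<sigma>s" and B: "B \<subseteq> {..<r}" and n: "1 \<le> n"
  shows "Aderiv \<rho> n (length_type len B) =
    Mrho \<rho> n (perm_prod \<sigma>s B) * real n powr ((\<Sum>j\<in>B. real (len j) - 1) / 2)"
proof -
  have fin: "finite B" using B finite_subset by blast
  let ?P = "perm_prod \<sigma>s B"
  have P: "finperm ?P \<and> (\<forall>k\<ge>2. ncyc ?P k = length_type len B k)"
    using perm_prod_disjoint_supp(1)[OF fin _ disjoint_cycles_disjoint_family_on[OF cs B]]
      disjoint_cycles_permutation[OF cs] B ncyc_perm_prod[OF cs B]
    by (auto simp: finperm_iff_permutation)
  define \<sigma> where "\<sigma> = (SOME \<sigma>. finperm \<sigma> \<and> (\<forall>k\<ge>2. ncyc \<sigma> k = length_type len B k))"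
  have "finperm \<sigma> \<and> (\<forall>k\<ge>2. ncyc \<sigma> k = length_type len B k)"
    unfolding \<sigma>_def by (rule someI[of _ ?P]) (rule P)
  then have M: "Mrho \<rho> n \<sigma> = Mrho \<rho> n ?P"
    using P by (intro Mrho_cong_ncyc) auto
  have "(\<Prod>k | length_type len B k \<noteq> 0. real n powr (real (length_type len B k) * (real k - 1) / 2))
      = real n powr (\<Sum>k | length_type len B k \<noteq> 0. real (length_type len B k) * (real k - 1) / 2)"
    using n by (simp add: powr_sum)
  also have "(\<Sum>k | length_type len B k \<noteq> 0. real (length_type len B k) * (real k - 1) / 2) =
      (\<Sum>j\<in>B. real (len j) - 1) / 2"
    using sum_length_type[OF fin, of "\<lambda>k. (real k - 1) / 2" len] by (simp add: sum_divide_distrib)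
  finally show ?thesis unfolding Aderiv_def \<sigma>_def[symmetric] M by simp
qed

section \<open>Counting maps with prescribed fibre types\<close>

definition fibre_typed_maps ::
    "(nat \<Rightarrow> nat) \<Rightarrow> nat set \<Rightarrow> nat \<Rightarrow> (nat \<Rightarrow> nat \<Rightarrow> nat) \<Rightarrow> (nat \<Rightarrow> nat) set" where
  "fibre_typed_maps len S m js =
     {f \<in> S \<rightarrow>\<^sub>E {..<m}. \<forall>t<m. length_type len {j \<in> S. f j = t} = js t}"

lemma mfact_eq_prod:
  assumes "finite K" "{k. i k \<noteq> 0} \<subseteq> K"
  shows "mfact i = (\<Prod>k\<in>K. fact (i k))"
  unfolding mfact_def by (rule prod.mono_neutral_left) (use assms in auto)

lemma mfact_nonzero: "mfact i \<noteq> 0"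
  unfolding mfact_def by (cases "finite {k. i k \<noteq> 0}") simp_all

lemma mfact_fun_upd_Suc:
  assumes "finite {k. i k \<noteq> 0}"
  shows "mfact (i(k := Suc (i k))) = real (Suc (i k)) * mfact i"
proof -
  let ?K = "insert k {k. i k \<noteq> 0}"
  have "mfact (i(k := Suc (i k))) = (\<Prod>k'\<in>?K. fact ((i(k := Suc (i k))) k'))"
    by (rule mfact_eq_prod) (use assms in auto)
  also have "\<dots> = fact (Suc (i k)) * (\<Prod>k'\<in>?K - {k}. fact (i k'))"
    by (subst prod.remove[of _ k]) (use assms in auto)
  also have "\<dots> = real (Suc (i k)) * (fact (i k) * (\<Prod>k'\<in>?K - {k}. fact (i k')))"
    by (simp add: algebra_simps)
  also have "fact (i k) * (\<Prod>k'\<in>?K - {k}. fact (i k')) = mfact i"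
    by (subst prod.remove[of _ k, symmetric]) (use assms in \<open>auto intro: mfact_eq_prod[symmetric]\<close>)
  finally show ?thesis .
qed

text \<open>A map on insert x S with value t at x restricts to a map on S whose fibre over t has
  lost one element of length len x.\<close>

definition remove_length :: "(nat \<Rightarrow> nat \<Rightarrow> nat) \<Rightarrow> nat \<Rightarrow> nat \<Rightarrow> nat \<Rightarrow> nat \<Rightarrow> nat" where
  "remove_length js t k = js(t := (js t)(k := js t k - 1))"

lemma length_type_fibre_insert:
  assumes "finite S" "x \<notin> S"
  shows "length_type len {j \<in> insert x S. f j = t'} k =
    length_type len {j \<in> S. f j = t'} k + (if f x = t' \<and> len x = k then 1 else 0)"
proof (cases "f x = t'")
  case True
  then have "{j \<in> insert x S. f j = t'} = insert x {j \<in> S. f j = t'}" by auto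
  then show ?thesis using True assms length_type_insert[of "{j \<in> S. f j = t'}" x len k] by simp
next
  case False
  then have "{j \<in> insert x S. f j = t'} = {j \<in> S. f j = t'}" by auto
  then show ?thesis using False by simp
qed

lemma fibre_typed_maps_insert_value_empty:
  assumes "finite S" "x \<notin> S" "js t (len x) = 0"
  shows "{f \<in> fibre_typed_maps len (insert x S) m js. f x = t} = {}"
proof -
  have "length_type len {j \<in> insert x S. f j = t} (len x) \<noteq> 0" if "f x = t" for f
    using that length_type_fibre_insert[OF assms(1,2), of len f t "len x"] by simp
  then show ?thesis
    using assms(3) by (force simp: fibre_typed_maps_def PiE_iff)
qed

lemma fibre_typed_maps_insert_value:
  assumes S: "finite S" "x \<notin> S" and t: "t < m" and pos: "0 < js t (len x)"
  shows "{f \<in> fibre_typed_maps len (insert x S) m js. f x = t} =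
    (\<lambda>g. g(x := t)) ` fibre_typed_maps len S m (remove_length js t (len x))"
proof (intro equalityI subsetI)
  fix f assume "f \<in> {f \<in> fibre_typed_maps len (insert x S) m js. f x = t}"
  then have f: "f \<in> insert x S \<rightarrow>\<^sub>E {..<m}" "\<forall>t'<m. length_type len {j \<in> insert x S. f j = t'} = js t'"
    "f x = t"
    unfolding fibre_typed_maps_def by auto
  let ?g = "f(x := undefined)"
  have "{j \<in> S. ?g j = t'} = {j \<in> S. f j = t'}" for t' using S(2) by auto
  then have "length_type len {j \<in> S. ?g j = t'} = remove_length js t (len x) t'" if "t' < m" for t'
    using f(2,3) that length_type_fibre_insert[OF S, of len f t']
    by (auto simp: remove_length_def fun_eq_iff)
  moreover have "?g \<in> S \<rightarrow>\<^sub>E {..<m}" using f(1) S(2) by (auto simp: PiE_iff)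
  moreover have "f = ?g(x := t)" using f(3) by auto
  ultimately show "f \<in> (\<lambda>g. g(x := t)) ` fibre_typed_maps len S m (remove_length js t (len x))"
    unfolding fibre_typed_maps_def by blast
next
  fix f assume "f \<in> (\<lambda>g. g(x := t)) ` fibre_typed_maps len S m (remove_length js t (len x))"
  then obtain g where g: "g \<in> S \<rightarrow>\<^sub>E {..<m}"
    "\<forall>t'<m. length_type len {j \<in> S. g j = t'} = remove_length js t (len x) t'" "f = g(x := t)"
    unfolding fibre_typed_maps_def by auto
  have "{j \<in> S. f j = t'} = {j \<in> S. g j = t'}" for t' using S(2) g(3) by auto
  then have "length_type len {j \<in> insert x S. f j = t'} = js t'" if "t' < m" for t'
    using g(2,3) that pos length_type_fibre_insert[OF S, of len f t']
    by (auto simp: remove_length_def fun_eq_iff)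
  moreover have "f \<in> insert x S \<rightarrow>\<^sub>E {..<m}" using g(1,3) t by (auto simp: PiE_iff)
  ultimately show "f \<in> {f \<in> fibre_typed_maps len (insert x S) m js. f x = t}"
    unfolding fibre_typed_maps_def using g(3) by auto
qed

lemma card_fibre_typed_maps_insert_value:
  assumes S: "finite S" "x \<notin> S" and t: "t < m" and pos: "0 < js t (len x)"
  shows "card {f \<in> fibre_typed_maps len (insert x S) m js. f x = t} =
    card (fibre_typed_maps len S m (remove_length js t (len x)))"
proof -
  have "inj_on (\<lambda>g. g(x := t)) (S \<rightarrow>\<^sub>E {..<m})"
    using inj_combinator[OF S(2), of "\<lambda>_. {..<m}"] t unfolding inj_on_def by auto
  then have "inj_on (\<lambda>g. g(x := t)) (fibre_typed_maps len S m (remove_length js t (len x)))"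
    by (rule inj_on_subset) (auto simp: fibre_typed_maps_def)
  then show ?thesis
    unfolding fibre_typed_maps_insert_value[of S x t m js len, OF assms] by (rule card_image)
qed

lemma sum_remove_length:
  assumes "t < m" "0 < js t k"
  shows "(\<Sum>t'<m. remove_length js t k t' k') + (if k' = k then 1 else 0) = (\<Sum>t'<m. js t' k')"
proof -
  have "(\<Sum>t'<m. js t' k') = js t k' + (\<Sum>t'\<in>{..<m} - {t}. js t' k')"
    using assms(1) by (simp add: sum.remove)
  moreover have "(\<Sum>t'<m. remove_length js t k t' k') =
      remove_length js t k t k' + (\<Sum>t'\<in>{..<m} - {t}. js t' k')"
    using assms(1) by (simp add: sum.remove remove_length_def)
  ultimately show ?thesis
    using assms(2) by (simp add: remove_length_def)
qed

lemma sum_remove_length_eq_length_type: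
  assumes "finite S" "x \<notin> S" "\<forall>k. (\<Sum>t<m. js t k) = length_type len (insert x S) k"
    and "t < m" "0 < js t (len x)"
  shows "\<forall>k. (\<Sum>t'<m. remove_length js t (len x) t' k) = length_type len S k"
proof
  fix k
  show "(\<Sum>t'<m. remove_length js t (len x) t' k) = length_type len S k"
    using sum_remove_length[where js = js and k = "len x" and k' = k, OF assms(4,5)] assms(3)
      length_type_insert[OF assms(1,2), of len k]
    by (cases "k = len x") auto
qed

lemma prod_mfact_remove_length:
  assumes "t < m" "0 < js t k" "finite {k'. js t k' \<noteq> 0}"
  shows "(\<Prod>t'<m. mfact (js t')) = real (js t k) * (\<Prod>t'<m. mfact (remove_length js t k t'))"
proof -
  let ?i = "(js t)(k := js t k - 1)"
  have fin: "finite {k'. ?i k' \<noteq> 0}"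
    by (rule finite_subset[OF _ assms(3)]) auto
  have upd: "?i(k := Suc (?i k)) = js t" using assms(2) by (auto simp: fun_eq_iff)
  have "mfact (js t) = real (Suc (?i k)) * mfact ?i"
    using mfact_fun_upd_Suc[OF fin, of k] by (simp only: upd)
  also have "Suc (?i k) = js t k" using assms(2) by simp
  finally have "mfact (js t) = real (js t k) * mfact ?i" .
  moreover have "(\<Prod>t'<m. mfact (js t')) = mfact (js t) * (\<Prod>t'\<in>{..<m} - {t}. mfact (js t'))"
    using assms(1) by (simp add: prod.remove)
  moreover have "(\<Prod>t'<m. mfact (remove_length js t k t')) =
      mfact ?i * (\<Prod>t'\<in>{..<m} - {t}. mfact (js t'))"
    using assms(1) by (simp add: prod.remove remove_length_def)
  ultimately show ?thesis by simp
qed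

lemma finite_fibre_typed_maps:
  assumes "finite S"
  shows "finite (fibre_typed_maps len S m js)"
proof (rule finite_subset)
  show "fibre_typed_maps len S m js \<subseteq> S \<rightarrow>\<^sub>E {..<m}" by (auto simp: fibre_typed_maps_def)
qed (simp add: assms finite_PiE)

lemma card_fibre_typed_maps_eq_sum_values:
  assumes "finite S" "x \<in> S"
  shows "card (fibre_typed_maps len S m js) = (\<Sum>t<m. card {f \<in> fibre_typed_maps len S m js. f x = t})"
proof -
  let ?F = "fibre_typed_maps len S m js"
  have "?F = (\<Union>t<m. {f \<in> ?F. f x = t})"
    using assms(2) by (auto simp: fibre_typed_maps_def PiE_iff)
  also have "card \<dots> = (\<Sum>t<m. card {f \<in> ?F. f x = t})"
    using finite_fibre_typed_maps[OF assms(1)] by (intro card_UN_disjoint) auto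
  finally show ?thesis .
qed

lemma finite_nonzero_if_sum_eq_length_type:
  fixes js :: "nat \<Rightarrow> nat \<Rightarrow> nat"
  assumes "finite S" "\<forall>k. (\<Sum>t<m. js t k) = length_type len S k" "t < m"
  shows "finite {k. js t k \<noteq> 0}"
proof -
  have "js t k \<le> (\<Sum>t'<m. js t' k)" for k
    using assms(3) by (intro member_le_sum) auto
  then have "js t k \<le> length_type len S k" for k
    using assms(2) by simp
  then have "{k. js t k \<noteq> 0} \<subseteq> len ` S"
    using length_type_nonzero_eq_image[OF assms(1)] by (metis (mono_tags, lifting) Collect_mono le_zero_eq)
  then show ?thesis using assms(1) by (rule finite_subset[OF _ finite_imageI])
qed

lemma mfact_length_type_insert:
  assumes "finite S" "x \<notin> S"
  shows "mfact (length_type len (insert x S)) =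
    real (Suc (length_type len S (len x))) * mfact (length_type len S)"
proof -
  have "length_type len (insert x S) = (length_type len S)(len x := Suc (length_type len S (len x)))"
    using length_type_insert[OF assms] by (auto simp: fun_eq_iff)
  then show ?thesis
    using mfact_fun_upd_Suc[of "length_type len S" "len x"] length_type_nonzero_eq_image[OF assms(1)]
      assms(1) by simp
qed

lemma card_fibre_typed_maps:
  assumes "finite S" "\<forall>k. (\<Sum>t<m. js t k) = length_type len S k"
  shows "real (card (fibre_typed_maps len S m js)) * (\<Prod>t<m. mfact (js t)) = mfact (length_type len S)"
  using assms
proof (induction S arbitrary: js rule: finite_induct)
  case empty
  then have "js t = (\<lambda>k. 0)" if "t < m" for t
    using that by (auto simp: fun_eq_iff)
  moreover have "fibre_typed_maps len {} m js = {\<lambda>_. undefined}"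
    using calculation by (auto simp: fibre_typed_maps_def)
  ultimately show ?case by (simp add: mfact_def)
next
  case (insert x S)
  let ?F = "fibre_typed_maps len (insert x S) m js"
  let ?k = "len x"
  have "real (card {f \<in> ?F. f x = t}) * (\<Prod>t'<m. mfact (js t')) =
      real (js t ?k) * mfact (length_type len S)" if t: "t < m" for t
  proof (cases "js t ?k = 0")
    case True
    then show ?thesis
      unfolding fibre_typed_maps_insert_value_empty[where js = js and t = t and len = len,
        OF insert.hyps True] by simp
  next
    case False
    then have pos: "0 < js t ?k" by simp
    have IH: "real (card (fibre_typed_maps len S m (remove_length js t ?k))) *
        (\<Prod>t'<m. mfact (remove_length js t ?k t')) = mfact (length_type len S)"
      using insert.IH[of "remove_length js t ?k"]
        sum_remove_length_eq_length_type[OF insert.hyps insert.prems t pos] by blast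
    have fin: "finite {k. js t k \<noteq> 0}"
      using finite_nonzero_if_sum_eq_length_type[OF _ insert.prems t] insert.hyps(1) by simp
    show ?thesis
      unfolding card_fibre_typed_maps_insert_value[where js = js and len = len, OF insert.hyps t pos]
        prod_mfact_remove_length[where js = js and k = ?k, OF t pos fin] IH[symmetric] by simp
  qed
  then have "real (card ?F) * (\<Prod>t<m. mfact (js t)) = (\<Sum>t<m. real (js t ?k)) * mfact (length_type len S)"
    using card_fibre_typed_maps_eq_sum_values[of "insert x S" x] insert.hyps(1)
    by (simp add: sum_distrib_right)
  also have "(\<Sum>t<m. real (js t ?k)) = real (Suc (length_type len S ?k))"
    using insert.prems length_type_insert[OF insert.hyps, of len ?k] by (simp flip: of_nat_sum)
  finally show ?case
    using mfact_length_type_insert[OF insert.hyps] by simp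
qed

section \<open>Surjections, set partitions and compositions\<close>

definition fibre :: "nat \<Rightarrow> (nat \<Rightarrow> nat) \<Rightarrow> nat \<Rightarrow> nat set" where
  "fibre r f t = {j \<in> {..<r}. f j = t}"

definition surjections :: "nat \<Rightarrow> nat \<Rightarrow> (nat \<Rightarrow> nat) set" where
  "surjections r m = {f \<in> {..<r} \<rightarrow>\<^sub>E {..<m}. \<forall>t<m. fibre r f t \<noteq> {}}"

lemma finite_surjections: "finite (surjections r m)"
proof (rule finite_subset)
  show "surjections r m \<subseteq> {..<r} \<rightarrow>\<^sub>E {..<m}" by (auto simp: surjections_def)
qed (simp add: finite_PiE)

lemma inj_on_fibre:
  assumes "f \<in> surjections r m"
  shows "inj_on (fibre r f) {..<m}"
proof (rule inj_onI)
  fix t t' assume t: "t \<in> {..<m}" and eq: "fibre r f t = fibre r f t'"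
  obtain j where "j \<in> fibre r f t" using assms t unfolding surjections_def by blast
  then show "t = t'" using eq by (auto simp: fibre_def)
qed

lemma partition_on_fibres:
  assumes "f \<in> surjections r m"
  shows "partition_on {..<r} (fibre r f ` {..<m})"
proof (rule partition_onI)
  show "\<Union>(fibre r f ` {..<m}) = {..<r}"
    using assms by (auto simp: surjections_def fibre_def PiE_iff)
  show "{} \<notin> fibre r f ` {..<m}"
    using assms by (auto simp: surjections_def)
  show "disjnt B B'" if "B \<in> fibre r f ` {..<m}" "B' \<in> fibre r f ` {..<m}" "B \<noteq> B'" for B B'
    using that by (auto simp: fibre_def disjnt_def)
qed

lemma card_fibres: "f \<in> surjections r m \<Longrightarrow> card (fibre r f ` {..<m}) = m"
  using card_image[OF inj_on_fibre] by simp

lemma eq_if_fibres_eq: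
  assumes "f \<in> {..<r} \<rightarrow>\<^sub>E {..<m}" "g \<in> {..<r} \<rightarrow>\<^sub>E {..<m}" "\<forall>t<m. fibre r f t = fibre r g t"
  shows "f = g"
proof
  fix j
  show "f j = g j"
  proof (cases "j < r")
    case True
    then have "j \<in> fibre r f (f j)" "f j < m" using assms(1) by (auto simp: fibre_def)
    then have "j \<in> fibre r g (f j)" using assms(3) by simp
    then show ?thesis by (simp add: fibre_def)
  qed (use assms in \<open>auto simp: PiE_iff extensional_def\<close>)
qed

lemma index_eq_if_mem_nth_permutations_of_set:
  assumes P: "partition_on A P" and xs: "xs \<in> permutations_of_set P"
    and "t < length xs" "t' < length xs" "j \<in> xs ! t" "j \<in> xs ! t'"
  shows "t = t'"
proof (rule ccontr)
  assume "t \<noteq> t'"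
  then have "xs ! t \<noteq> xs ! t'"
    using assms(3,4) nth_eq_iff_index_eq xs by (auto simp: permutations_of_set_def)
  moreover have "xs ! t \<in> P" "xs ! t' \<in> P"
    using assms(3,4) xs by (auto simp: permutations_of_set_def)
  ultimately have "xs ! t \<inter> xs ! t' = {}"
    using P unfolding partition_on_def disjoint_def by blast
  then show False using assms(5,6) by blast
qed

lemma ex_surjection_with_fibres:
  assumes P: "partition_on {..<r} P" and xs: "xs \<in> permutations_of_set P"
  shows "\<exists>f \<in> surjections r (length xs). map (fibre r f) [0..<length xs] = xs"
proof -
  let ?m = "length xs"
  have set_xs: "set xs = P" using xs by (simp add: permutations_of_set_def)
  have block: "xs ! t \<in> P" if "t < ?m" for t using that set_xs by auto
  note uniq = index_eq_if_mem_nth_permutations_of_set[OF P xs]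
  have ex: "\<exists>t<?m. j \<in> xs ! t" if "j < r" for j
  proof -
    have "j \<in> \<Union>P" using that P by (simp add: partition_on_def)
    then obtain B where "B \<in> set xs" "j \<in> B" using set_xs by blast
    then show ?thesis by (auto simp: in_set_conv_nth)
  qed
  define f where "f j = (if j < r then (THE t. t < ?m \<and> j \<in> xs ! t) else undefined)" for j
  have f: "f j < ?m \<and> j \<in> xs ! f j" if j: "j < r" for j
  proof -
    obtain t where t: "t < ?m" "j \<in> xs ! t" using ex[OF j] by blast
    then have "(THE t. t < ?m \<and> j \<in> xs ! t) = t"
      by (intro the_equality) (use uniq in blast)+
    then show ?thesis using t j by (simp add: f_def)
  qed
  have fibre_f: "fibre r f t = xs ! t" if "t < ?m" for t
  proof
    show "fibre r f t \<subseteq> xs ! t" using f by (auto simp: fibre_def)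
    have "xs ! t \<subseteq> {..<r}" using block[OF that] P by (auto simp: partition_on_def)
    then show "xs ! t \<subseteq> fibre r f t"
      using f uniq[OF _ that] by (auto simp: fibre_def)
  qed
  have "f \<in> {..<r} \<rightarrow>\<^sub>E {..<?m}" using f by (auto simp: PiE_iff extensional_def f_def)
  moreover have "xs ! t \<noteq> {}" if "t < ?m" for t using block[OF that] P by (auto simp: partition_on_def)
  ultimately have "f \<in> surjections r ?m" using fibre_f by (simp add: surjections_def)
  moreover have "map (fibre r f) [0..<?m] = xs" by (rule nth_equalityI) (simp_all add: fibre_f)
  ultimately show ?thesis by blast
qed

lemma card_surjections_with_fibres:
  assumes P: "partition_on {..<r} P" and card: "card P = m"
  shows "card {f \<in> surjections r m. fibre r f ` {..<m} = P} = fact m"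
proof -
  let ?h = "\<lambda>f. map (fibre r f) [0..<m]"
  have "bij_betw ?h {f \<in> surjections r m. fibre r f ` {..<m} = P} (permutations_of_set P)"
  proof (rule bij_betw_imageI)
    show "inj_on ?h {f \<in> surjections r m. fibre r f ` {..<m} = P}"
    proof (rule inj_onI)
      fix f g assume f: "f \<in> {f \<in> surjections r m. fibre r f ` {..<m} = P}"
        and g: "g \<in> {f \<in> surjections r m. fibre r f ` {..<m} = P}" and "?h f = ?h g"
      then have "\<forall>t<m. fibre r f t = fibre r g t"
        by (metis (no_types, lifting) diff_zero length_upt nth_map nth_upt add_0)
      then show "f = g"
        using f g eq_if_fibres_eq by (auto simp: surjections_def)
    qed
    have "?h f \<in> permutations_of_set P" if "f \<in> surjections r m" "fibre r f ` {..<m} = P" for f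
      using that inj_on_fibre[OF that(1)]
      by (simp add: permutations_of_set_def distinct_map atLeast_upt)
    moreover have "xs \<in> ?h ` {f \<in> surjections r m. fibre r f ` {..<m} = P}"
      if xs: "xs \<in> permutations_of_set P" for xs
    proof -
      have "length xs = m"
        using xs card distinct_card[of xs] by (auto simp: permutations_of_set_def)
      then obtain f where "f \<in> surjections r m" "?h f = xs"
        using ex_surjection_with_fibres[OF P xs] by blast
      moreover have "fibre r f ` {..<m} = P"
        using xs arg_cong[OF calculation(2), of set] by (simp add: permutations_of_set_def atLeast_upt)
      ultimately show ?thesis by blast
    qed
    ultimately show "?h ` {f \<in> surjections r m. fibre r f ` {..<m} = P} = permutations_of_set P"
      by blast
  qed
  then have "card {f \<in> surjections r m. fibre r f ` {..<m} = P} = card (permutations_of_set P)"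
    by (rule bij_betw_same_card)
  then show ?thesis using card finite_elements[OF finite_lessThan P] by simp
qed

lemma sum_partitions_eq_sum_surjections:
  fixes g :: "nat set \<Rightarrow> 'a :: comm_semiring_1"
  shows "of_nat (fact m) * (\<Sum>P | partition_on {..<r} P \<and> card P = m. \<Prod>B\<in>P. g B) =
    (\<Sum>f\<in>surjections r m. \<Prod>t<m. g (fibre r f t))"
proof -
  let ?T = "{P. partition_on {..<r} P \<and> card P = m}"
  have "(\<Sum>f\<in>surjections r m. \<Prod>t<m. g (fibre r f t)) =
      (\<Sum>f\<in>surjections r m. \<Prod>B\<in>fibre r f ` {..<m}. g B)"
    by (intro sum.cong refl) (simp add: prod.reindex[OF inj_on_fibre])
  also have "\<dots> = (\<Sum>P\<in>?T. \<Sum>f\<in>{f \<in> surjections r m. fibre r f ` {..<m} = P}. \<Prod>B\<in>P. g B)"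
  proof -
    have "finite ?T"
      using finitely_many_partition_on[of "{..<r}"] by (auto intro: finite_subset)
    moreover have "(\<lambda>f. fibre r f ` {..<m}) ` surjections r m \<subseteq> ?T"
      using partition_on_fibres card_fibres by blast
    ultimately show ?thesis
      by (subst sum.group[symmetric, OF finite_surjections]) auto
  qed
  also have "\<dots> = (\<Sum>P\<in>?T. of_nat (fact m) * (\<Prod>B\<in>P. g B))"
    by (intro sum.cong refl) (simp add: card_surjections_with_fibres)
  finally show ?thesis by (simp add: sum_distrib_left)
qed

definition compositions :: "(nat \<Rightarrow> nat) \<Rightarrow> nat \<Rightarrow> (nat \<Rightarrow> nat \<Rightarrow> nat) set" where
  "compositions i m = {js \<in> {..<m} \<rightarrow>\<^sub>E {j. j \<le> i}.
     (\<forall>t<m. js t \<noteq> (\<lambda>_. 0)) \<and> (\<forall>k. (\<Sum>t<m. js t k) = i k)}"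

lemma finite_funs_le:
  fixes i :: "'a \<Rightarrow> nat"
  assumes "finite {k. i k \<noteq> 0}"
  shows "finite {j. j \<le> i}"
proof -
  let ?D = "{k. i k \<noteq> 0}"
  have "{j. j \<le> i} \<subseteq> (\<lambda>g k. if k \<in> ?D then g k else 0) ` (PiE ?D (\<lambda>k. {..i k}))"
  proof
    fix j :: "'a \<Rightarrow> nat" assume "j \<in> {j. j \<le> i}"
    then have le: "j k \<le> i k" for k by (simp add: le_fun_def)
    have "j = (\<lambda>k. if k \<in> ?D then restrict j ?D k else 0)"
    proof
      fix k show "j k = (if k \<in> ?D then restrict j ?D k else 0)" using le[of k] by auto
    qed
    moreover have "restrict j ?D \<in> PiE ?D (\<lambda>k. {..i k})"
      using le by simp
    ultimately show "j \<in> (\<lambda>g k. if k \<in> ?D then g k else 0) ` (PiE ?D (\<lambda>k. {..i k}))"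
      by blast
  qed
  then show ?thesis
    by (rule finite_subset) (intro finite_imageI finite_PiE assms; simp)
qed

lemma finite_compositions:
  assumes "finite {k. i k \<noteq> 0}"
  shows "finite (compositions i m)"
proof (rule finite_subset)
  show "compositions i m \<subseteq> {..<m} \<rightarrow>\<^sub>E {j. j \<le> i}" by (auto simp: compositions_def)
qed (use finite_funs_le[OF assms] in \<open>simp add: finite_PiE\<close>)

lemma sum_length_type_fibres:
  assumes "f \<in> {..<r} \<rightarrow>\<^sub>E {..<m}"
  shows "(\<Sum>t<m. length_type len (fibre r f t) k) = length_type len {..<r} k"
proof -
  have "{j \<in> {..<r}. len j = k} = (\<Union>t<m. {j \<in> fibre r f t. len j = k})"
    using assms by (auto simp: fibre_def PiE_iff)
  also have "card \<dots> = (\<Sum>t<m. card {j \<in> fibre r f t. len j = k})"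
    by (rule card_UN_disjoint) (auto simp: fibre_def)
  finally show ?thesis by (simp add: length_type_def)
qed

lemma fibre_types_in_compositions:
  assumes f: "f \<in> surjections r m"
  shows "restrict (\<lambda>t. length_type len (fibre r f t)) {..<m} \<in> compositions (length_type len {..<r}) m"
proof -
  have "length_type len (fibre r f t) \<noteq> (\<lambda>_. 0)" if t: "t < m" for t
  proof
    assume zero: "length_type len (fibre r f t) = (\<lambda>_. 0)"
    obtain j where "j \<in> fibre r f t" using f t by (auto simp: surjections_def)
    then have "length_type len (fibre r f t) (len j) \<noteq> 0"
      by (auto simp: length_type_def fibre_def card_eq_0_iff)
    then show False using zero by simp
  qed
  moreover have "length_type len (fibre r f t) \<le> length_type len {..<r}" for t
    by (rule length_type_mono) (auto simp: fibre_def)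
  ultimately show ?thesis
    using f sum_length_type_fibres[of f r m len] by (auto simp: compositions_def surjections_def)
qed

lemma surjections_with_fibre_types:
  assumes js: "js \<in> compositions (length_type len {..<r}) m"
  shows "{f \<in> surjections r m. restrict (\<lambda>t. length_type len (fibre r f t)) {..<m} = js} =
    fibre_typed_maps len {..<r} m js"
proof (intro equalityI subsetI)
  fix f assume "f \<in> {f \<in> surjections r m. restrict (\<lambda>t. length_type len (fibre r f t)) {..<m} = js}"
  then have f: "f \<in> surjections r m" "restrict (\<lambda>t. length_type len (fibre r f t)) {..<m} = js"
    by auto
  have "length_type len {j \<in> {..<r}. f j = t} = js t" if "t < m" for t
    using f(2)[THEN fun_cong, of t] that by (simp add: fibre_def)
  then show "f \<in> fibre_typed_maps len {..<r} m js"
    using f(1) unfolding fibre_typed_maps_def surjections_def by blast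
next
  fix f assume f: "f \<in> fibre_typed_maps len {..<r} m js"
  have "fibre r f t \<noteq> {}" if t: "t < m" for t
  proof
    assume "fibre r f t = {}"
    moreover have "js t = length_type len (fibre r f t)"
      using f t by (simp add: fibre_typed_maps_def fibre_def)
    ultimately show False using js t by (simp add: compositions_def)
  qed
  moreover have "restrict (\<lambda>t. length_type len (fibre r f t)) {..<m} = js"
    using f js by (auto simp: fibre_typed_maps_def compositions_def fibre_def fun_eq_iff PiE_iff
      extensional_def)
  ultimately show "f \<in> {f \<in> surjections r m. restrict (\<lambda>t. length_type len (fibre r f t)) {..<m} = js}"
    using f by (auto simp: fibre_typed_maps_def surjections_def)
qed

lemma sum_surjections_eq_sum_compositions:
  fixes a :: "(nat \<Rightarrow> nat) \<Rightarrow> real" and len :: "nat \<Rightarrow> nat" and r :: nat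
  defines "i \<equiv> length_type len {..<r}"
  shows "(\<Sum>f\<in>surjections r m. \<Prod>t<m. a (length_type len (fibre r f t))) =
    mfact i * (\<Sum>js\<in>compositions i m. \<Prod>t<m. a (js t) / mfact (js t))"
proof -
  let ?\<Psi> = "\<lambda>f. restrict (\<lambda>t. length_type len (fibre r f t)) {..<m}"
  have fin_i: "finite {k. i k \<noteq> 0}"
    unfolding i_def length_type_nonzero_eq_image[OF finite_lessThan] by simp
  have count: "real (card {f \<in> surjections r m. ?\<Psi> f = js}) = mfact i / (\<Prod>t<m. mfact (js t))"
    if js: "js \<in> compositions i m" for js
    using card_fibre_typed_maps[of "{..<r}" js m len] js mfact_nonzero
    unfolding surjections_with_fibre_types[OF js[unfolded i_def]]
    by (simp add: compositions_def i_def eq_divide_eq prod_zero_iff)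
  have "(\<Sum>f\<in>surjections r m. \<Prod>t<m. a (length_type len (fibre r f t))) =
      (\<Sum>js\<in>compositions i m. \<Sum>f\<in>{f \<in> surjections r m. ?\<Psi> f = js}. \<Prod>t<m. a (?\<Psi> f t))"
    by (subst sum.group[OF finite_surjections finite_compositions[OF fin_i]])
      (auto simp: i_def fibre_types_in_compositions)
  also have "\<dots> = (\<Sum>js\<in>compositions i m. real (card {f \<in> surjections r m. ?\<Psi> f = js}) *
      (\<Prod>t<m. a (js t)))"
    by (intro sum.cong refl) simp
  also have "\<dots> = (\<Sum>js\<in>compositions i m. mfact i * (\<Prod>t<m. a (js t) / mfact (js t)))"
    by (intro sum.cong refl) (simp add: count prod_dividef)
  finally show ?thesis by (simp add: sum_distrib_left)
qed

section \<open>Derivatives of ln A are permutation cumulants\<close>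

lemma card_partition_on_lessThan:
  assumes r: "1 \<le> r" and P: "partition_on {..<r} P"
  shows "card P \<in> {1..r}"
proof -
  have fin: "finite p" if "p \<in> P" for p
    using P that finite_subset[of p "{..<r}"] by (auto simp: partition_on_def)
  have "0 \<in> \<Union>P" using P r by (simp add: partition_on_def)
  then have "P \<noteq> {}" by auto
  then have "1 \<le> card P"
    using finite_elements[OF finite_lessThan P] by (simp add: Suc_le_eq card_gt_0_iff)
  moreover have "(\<Sum>p\<in>P. 1) \<le> (\<Sum>p\<in>P. card p)"
    using fin partition_onD3[OF P] by (intro sum_mono) (auto simp: Suc_le_eq card_gt_0_iff)
  then have "card P \<le> r"
    using product_partition[OF P fin] by simp
  ultimately show ?thesis by simp
qed

lemma mfact_mult_log_coeff_eq_sum_partitions: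
  fixes a :: "(nat \<Rightarrow> nat) \<Rightarrow> real"
  assumes r: "1 \<le> r"
  shows "mfact (length_type len {..<r}) * (\<Sum>m\<in>{1..r}. (-1) ^ (m - 1) / real m *
      (\<Sum>js\<in>compositions (length_type len {..<r}) m. \<Prod>t<m. a (js t) / mfact (js t)))
    = (\<Sum>P | partition_on {..<r} P. (-1) ^ (card P - 1) * fact (card P - 1) *
        (\<Prod>B\<in>P. a (length_type len B)))"
proof -
  let ?S = "\<lambda>m. (\<Sum>P | partition_on {..<r} P \<and> card P = m. \<Prod>B\<in>P. a (length_type len B))"
  have "mfact (length_type len {..<r}) * (\<Sum>m\<in>{1..r}. (-1) ^ (m - 1) / real m *
      (\<Sum>js\<in>compositions (length_type len {..<r}) m. \<Prod>t<m. a (js t) / mfact (js t))) =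
      (\<Sum>m\<in>{1..r}. (-1) ^ (m - 1) / real m * (mfact (length_type len {..<r}) *
        (\<Sum>js\<in>compositions (length_type len {..<r}) m. \<Prod>t<m. a (js t) / mfact (js t))))"
    by (simp add: sum_distrib_left algebra_simps)
  also have "\<dots> = (\<Sum>m\<in>{1..r}. (-1) ^ (m - 1) / real m *
      (\<Sum>f\<in>surjections r m. \<Prod>t<m. a (length_type len (fibre r f t))))"
    by (simp only: sum_surjections_eq_sum_compositions)
  also have "\<dots> = (\<Sum>m\<in>{1..r}. (-1) ^ (m - 1) / real m * (fact m * ?S m))"
    by (simp add: sum_partitions_eq_sum_surjections[where g = "\<lambda>B. a (length_type len B)", symmetric])
  also have "\<dots> = (\<Sum>m\<in>{1..r}. (-1) ^ (m - 1) * fact (m - 1) * ?S m)"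
    by (intro sum.cong refl) (auto simp: fact_reduce)
  also have "\<dots> = (\<Sum>m\<in>{1..r}. \<Sum>P\<in>{P. partition_on {..<r} P \<and> card P = m}.
      (-1) ^ (card P - 1) * fact (card P - 1) * (\<Prod>B\<in>P. a (length_type len B)))"
    by (simp add: sum_distrib_left)
  also have "\<dots> = (\<Sum>P | partition_on {..<r} P. (-1) ^ (card P - 1) * fact (card P - 1) *
      (\<Prod>B\<in>P. a (length_type len B)))"
  proof -
    let ?T = "{P. partition_on {..<r} P}"
    have "(\<Sum>m\<in>{1..r}. \<Sum>P\<in>{P \<in> ?T. card P = m}. h P) = (\<Sum>P\<in>?T. h P)"
      for h :: "nat set set \<Rightarrow> real"
      by (rule sum.group[OF finitely_many_partition_on[OF finite_lessThan] finite_atLeastAtMost])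
        (use card_partition_on_lessThan[OF r] in blast)
    from this[of "\<lambda>P. (-1) ^ (card P - 1) * fact (card P - 1) * (\<Prod>B\<in>P. a (length_type len B))"]
    show ?thesis by (simp only: mem_Collect_eq)
  qed
  finally show ?thesis .
qed

theorem lnA_deriv_length_type_eq_kappa:
  assumes cs: "disjoint_cycles r len \<sigma>s" and r: "1 \<le> r" and n: "1 \<le> n"
  shows "lnA_deriv \<rho> n (length_type len {..<r}) =
    real n powr ((\<Sum>j<r. real (len j) - 1) / 2) * kappa \<rho> n r \<sigma>s"
proof -
  let ?e = "\<lambda>B. (\<Sum>j\<in>B. real (len j) - 1) / 2"
  have "(\<Prod>B\<in>P. Aderiv \<rho> n (length_type len B)) =
      (\<Prod>B\<in>P. Mrho \<rho> n (perm_prod \<sigma>s B)) * real n powr ?e {..<r}"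
    if P: "partition_on {..<r} P" for P
  proof -
    have "(\<Prod>B\<in>P. Aderiv \<rho> n (length_type len B)) =
        (\<Prod>B\<in>P. Mrho \<rho> n (perm_prod \<sigma>s B) * real n powr ?e B)"
      using P by (intro prod.cong refl Aderiv_length_type[OF cs _ n]) (auto simp: partition_on_def)
    also have "\<dots> = (\<Prod>B\<in>P. Mrho \<rho> n (perm_prod \<sigma>s B)) * real n powr (\<Sum>B\<in>P. ?e B)"
      using n by (simp add: prod.distrib powr_sum)
    also have "(\<Sum>B\<in>P. ?e B) = ?e {..<r}"
      using sum.partition[OF finite_lessThan P, of "\<lambda>j. real (len j) - 1"]
      by (simp add: sum_divide_distrib)
    finally show ?thesis .
  qed
  then show ?thesis
    unfolding lnA_deriv_def lnA_coeff_def compositions_def[symmetric] morder_length_type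
      mfact_mult_log_coeff_eq_sum_partitions[OF r] kappa_def
    by (simp add: sum_distrib_left sum_distrib_right algebra_simps)
qed

lemma kappa_Suc_0: "kappa \<rho> n (Suc 0) \<sigma>s = Mrho \<rho> n (\<sigma>s 0)"
proof -
  have "partition_on {0} P \<longleftrightarrow> P = {{0}}" for P :: "nat set set"
  proof
    assume P: "partition_on {0} P"
    then have "B = {0}" if "B \<in> P" for B
      using that partition_onD3[OF P] P unfolding partition_on_def
      by (metis Sup_upper subset_singleton_iff)
    moreover have "P \<noteq> {}" using P by (auto simp: partition_on_def)
    ultimately show "P = {{0}}" by blast
  qed (simp add: partition_on_space)
  then have "{P. partition_on {..<Suc 0} P} = {{{0}}}"
    by (auto simp: lessThan_Suc)
  then show ?thesis by (simp add: kappa_def perm_prod_def)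
qed

lemma lnA_deriv_unit_index:
  assumes "is_cycle k \<sigma>" "1 \<le> k" "1 \<le> n"
  shows "lnA_deriv \<rho> n (unit_index k) = real n powr ((real k - 1) / 2) * Mrho \<rho> n \<sigma>"
proof -
  have "disjoint_cycles 1 (\<lambda>_. k) (\<lambda>_. \<sigma>)" using assms by (simp add: disjoint_cycles_def)
  moreover have "length_type (\<lambda>_. k) {..<1} = unit_index k"
    by (auto simp: length_type_def unit_index_def fun_eq_iff)
  ultimately show ?thesis
    using lnA_deriv_length_type_eq_kappa[of 1 "\<lambda>_. k" "\<lambda>_. \<sigma>" n \<rho>] assms by (simp add: kappa_Suc_0)
qed

lemma ex_length_type_eq:
  assumes "mindex i"
  shows "\<exists>len. (\<forall>j<morder i. 1 \<le> len j) \<and> length_type len {..<morder i} = i"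
proof -
  let ?K = "{k. i k \<noteq> 0}"
  have fin: "finite ?K" and i0: "i 0 = 0" using assms by (auto simp: mindex_def)
  define ks where "ks = concat (map (\<lambda>k. replicate (i k) k) (sorted_list_of_set ?K))"
  have count: "length (filter ((=) k) ks) = i k" for k
  proof -
    have "length (filter ((=) k) ks) = (\<Sum>k'\<in>?K. length (filter ((=) k) (replicate (i k') k')))"
      using fin by (simp add: ks_def length_concat filter_concat comp_def sum_list_distinct_conv_sum_set)
    also have "\<dots> = (\<Sum>k'\<in>?K. if k = k' then i k' else 0)"
      by (intro sum.cong refl) simp
    also have "\<dots> = i k" using fin by (simp add: sum.delta)
    finally show ?thesis .
  qed
  have "length ks = morder i"
    using fin by (simp add: ks_def length_concat comp_def sum_list_distinct_conv_sum_set morder_def)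
  moreover have "1 \<le> ks ! j" if "j < length ks" for j
  proof -
    have "ks ! j \<in> ?K" using nth_mem[OF that] fin by (auto simp: ks_def)
    then show ?thesis using i0 by (cases "ks ! j") auto
  qed
  moreover have "length_type (\<lambda>j. ks ! j) {..<length ks} = i"
    using count by (simp add: length_type_def fun_eq_iff length_filter_conv_card eq_commute)
  ultimately show ?thesis by metis
qed

lemma ex_disjoint_cycles:
  assumes "\<forall>j<r. 1 \<le> len j"
  shows "\<exists>\<sigma>s. disjoint_cycles r len \<sigma>s"
proof -
  define start where "start j = (\<Sum>t<j. len t)" for j
  define \<sigma>s where "\<sigma>s j = cycle_of_list [start j..<start j + len j]" for j
  have supp: "supp (\<sigma>s j) \<subseteq> {start j..<start j + len j}" for j
  proof
    fix x assume "x \<in> supp (\<sigma>s j)"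
    then have "x \<in> set [start j..<start j + len j]"
      using id_outside_supp unfolding supp_def \<sigma>s_def by fastforce
    then show "x \<in> {start j..<start j + len j}" by simp
  qed
  have "start j + len j \<le> start j'" if "j < j'" for j j'
    using sum_mono2[of "{..<j'}" "{..<Suc j}" len] that by (simp add: start_def)
  then have "supp (\<sigma>s j) \<inter> supp (\<sigma>s j') = {}" if "j < j'" for j j'
    using supp[of j] supp[of j'] that by fastforce
  then have "supp (\<sigma>s j) \<inter> supp (\<sigma>s j') = {}" if "j \<noteq> j'" for j j'
    using that by (metis Int_commute linorder_neq_iff)
  moreover have "is_cycle (len j) (\<sigma>s j)" for j
    unfolding is_cycle_def \<sigma>s_def by (rule exI[of _ "[start j..<start j + len j]"]) simp
  ultimately show ?thesis
    using assms unfolding disjoint_cycles_def by blast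
qed

lemma tendsto_lnA_deriv_unit_index_iff:
  assumes "is_cycle k \<sigma>" "1 \<le> k"
  shows "(\<lambda>n. lnA_deriv \<rho> n (unit_index k)) \<longlonglongrightarrow> c \<longleftrightarrow>
    (\<lambda>n. real n powr ((real k - 1) / 2) * Mrho \<rho> n \<sigma>) \<longlonglongrightarrow> c"
  by (rule tendsto_cong) (use lnA_deriv_unit_index[OF assms] in \<open>auto simp: eventually_sequentially\<close>)

lemma tendsto_lnA_deriv_length_type_iff:
  assumes "disjoint_cycles r len \<sigma>s" "1 \<le> r"
  shows "(\<lambda>n. lnA_deriv \<rho> n (length_type len {..<r})) \<longlonglongrightarrow> c \<longleftrightarrow>
    (\<lambda>n. real n powr ((\<Sum>j<r. real (len j) - 1) / 2) * kappa \<rho> n r \<sigma>s) \<longlonglongrightarrow> c"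
  by (rule tendsto_cong)
    (use lnA_deriv_length_type_eq_kappa[OF assms] in \<open>auto simp: eventually_sequentially\<close>)

lemma tendsto_lnA_first_derivatives_iff:
  "(\<forall>k\<ge>1. (\<lambda>n. lnA_deriv \<rho> n (unit_index k)) \<longlonglongrightarrow> c k) \<longleftrightarrow>
   (\<forall>k\<ge>1. \<forall>\<sigma>. is_cycle k \<sigma> \<longrightarrow> (\<lambda>n. real n powr ((real k - 1) / 2) * Mrho \<rho> n \<sigma>) \<longlonglongrightarrow> c k)"
proof -
  have "is_cycle k (cycle_of_list [0..<k])" for k
    unfolding is_cycle_def by (rule exI[of _ "[0..<k]"]) simp
  then show ?thesis
    using tendsto_lnA_deriv_unit_index_iff by blast
qed

lemma tendsto_lnA_mixed_derivatives_iff: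
  "(\<forall>i. mindex i \<and> 2 \<le> morder i \<longrightarrow> (\<lambda>n. lnA_deriv \<rho> n i) \<longlonglongrightarrow> 0) \<longleftrightarrow>
   (\<forall>r\<ge>2. \<forall>\<sigma>s len. disjoint_cycles r len \<sigma>s \<longrightarrow>
      (\<lambda>n. real n powr ((\<Sum>j<r. real (len j) - 1) / 2) * kappa \<rho> n r \<sigma>s) \<longlonglongrightarrow> 0)"
proof
  assume lim: "\<forall>i. mindex i \<and> 2 \<le> morder i \<longrightarrow> (\<lambda>n. lnA_deriv \<rho> n i) \<longlonglongrightarrow> 0"
  show "\<forall>r\<ge>2. \<forall>\<sigma>s len. disjoint_cycles r len \<sigma>s \<longrightarrow>
      (\<lambda>n. real n powr ((\<Sum>j<r. real (len j) - 1) / 2) * kappa \<rho> n r \<sigma>s) \<longlonglongrightarrow> 0"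
  proof (intro allI impI)
    fix r \<sigma>s len assume r: "2 \<le> r" and cs: "disjoint_cycles r len \<sigma>s"
    then have "mindex (length_type len {..<r})"
      by (intro mindex_length_type) (auto simp: disjoint_cycles_def)
    then show "(\<lambda>n. real n powr ((\<Sum>j<r. real (len j) - 1) / 2) * kappa \<rho> n r \<sigma>s) \<longlonglongrightarrow> 0"
      using lim[rule_format, of "length_type len {..<r}"] tendsto_lnA_deriv_length_type_iff[OF cs] r
      by (simp add: morder_length_type)
  qed
next
  assume lim: "\<forall>r\<ge>2. \<forall>\<sigma>s len. disjoint_cycles r len \<sigma>s \<longrightarrow>
      (\<lambda>n. real n powr ((\<Sum>j<r. real (len j) - 1) / 2) * kappa \<rho> n r \<sigma>s) \<longlonglongrightarrow> 0"
  show "\<forall>i. mindex i \<and> 2 \<le> morder i \<longrightarrow> (\<lambda>n. lnA_deriv \<rho> n i) \<longlonglongrightarrow> 0"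
  proof (intro allI impI)
    fix i assume i: "mindex i \<and> 2 \<le> morder i"
    then obtain len where len: "\<forall>j<morder i. 1 \<le> len j" "length_type len {..<morder i} = i"
      using ex_length_type_eq by blast
    then obtain \<sigma>s where "disjoint_cycles (morder i) len \<sigma>s"
      using ex_disjoint_cycles by blast
    then show "(\<lambda>n. lnA_deriv \<rho> n i) \<longlonglongrightarrow> 0"
      using lim tendsto_lnA_deriv_length_type_iff[of "morder i" len \<sigma>s] len(2) i by auto
  qed
qed

theorem mainTheorem10:
  fixes \<rho> :: "nat \<Rightarrow> nat list \<Rightarrow> real"
  assumes prob: "\<forall>n\<ge>1. (\<forall>p\<in>partitions n. 0 \<le> \<rho> n p) \<and> (\<Sum>p\<in>partitions n. \<rho> n p) = 1"
  shows "LLN_appropriate \<rho> \<longleftrightarrow>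
    (\<exists>c :: nat \<Rightarrow> real.
       (\<forall>k\<ge>1. \<forall>\<sigma>. is_cycle k \<sigma> \<longrightarrow>
          (\<lambda>n. real n powr ((real k - 1) / 2) * Mrho \<rho> n \<sigma>) \<longlonglongrightarrow> c k) \<and>
       (\<forall>r\<ge>2. \<forall>\<sigma>s :: nat \<Rightarrow> (nat \<Rightarrow> nat). \<forall>len :: nat \<Rightarrow> nat.
          (\<forall>j<r. 1 \<le> len j \<and> is_cycle (len j) (\<sigma>s j)) \<and>
          (\<forall>j<r. \<forall>j'<r. j \<noteq> j' \<longrightarrow> supp (\<sigma>s j) \<inter> supp (\<sigma>s j') = {}) \<longrightarrow>
          (\<lambda>n. real n powr ((\<Sum>j<r. real (len j) - 1) / 2) * kappa \<rho> n r \<sigma>s) \<longlonglongrightarrow> 0))"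
  unfolding LLN_appropriate_def tendsto_lnA_first_derivatives_iff tendsto_lnA_mixed_derivatives_iff
    disjoint_cycles_def ..

end
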